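(* Let $d\ge1$ and let $G:\mathbb{R}^d\to\mathbb{R}$ satisfy: $G\ge 0$ and $\mathrm{supp}(G)=\mathbb{R}^d$; $G\in W^{1,1}(\mathbb{R}^d)\cap L^\infty(\mathbb{R}^d)\cap C^2(\mathbb{R}^d)$; $G(x)=g(|x|)$ with $g'(r)<0$ for all $r>0$, $g''(0)<0$, $\lim_{r\to+\infty}g(r)=0$; and $\int_{\mathbb{R}^d}G\,dx=1$. Let $0<\varepsilon<1$ and $$E[\rho]=\frac{\varepsilon}{2}\int_{\mathbb{R}^d}\rho^2\,dx-\frac12\int_{\mathbb{R}^d}\int_{\mathbb{R}^d}G(x-y)\rho(x)\rho(y)\,dy\,dx.$$ Then $\inf_{\rho\in\mathcal{P}\cap L^2(\mathbb{R}^d)}E[\rho]<0$.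
   Context: $\mathcal{P}=\{\rho\in L^1(\mathbb{R}^d):\rho\ge0,\ \int_{\mathbb{R}^d}\rho\,dx=1\}$. $\varepsilon>0$ is a diffusion constant. *)

theory Defs
  imports "HOL-Analysis.Analysis"
begin

text \<open>Admissible densities: elements of P intersected with L^2 on the Euclidean space 'a
  (any Borel representative, pointwise nonnegative).\<close>
definition adm_density :: "('a::euclidean_space \<Rightarrow> real) \<Rightarrow> bool" where
  "adm_density \<rho> \<longleftrightarrow> \<rho> \<in> borel_measurable lborel \<and> (\<forall>x. 0 \<le> \<rho> x)
     \<and> integrable lborel \<rho> \<and> (LINT x|lborel. \<rho> x) = 1
     \<and> integrable lborel (\<lambda>x. (\<rho> x)\<^sup>2)"

definition energy :: "real \<Rightarrow> ('a::euclidean_space \<Rightarrow> real) \<Rightarrow> ('a \<Rightarrow> real) \<Rightarrow> real" where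
  "energy \<epsilon> G \<rho> = \<epsilon> / 2 * (LINT x|lborel. (\<rho> x)\<^sup>2)
     - 1/2 * (LINT x|lborel. (LINT y|lborel. G (x - y) * \<rho> x * \<rho> y))"

end

theory Submission imports Defs begin

text \<open>Test the energy on the uniform density \<open>\<rho>\<close> on a large cube \<open>Q(R)\<close> of side \<open>2R\<close>.
  For \<open>x \<in> Q(R - s)\<close> the translate \<open>x - Q(s)\<close> lies inside \<open>Q(R)\<close>, so the self-interaction
  \<open>\<integral>\<integral> G(x - y) \<rho>(x) \<rho>(y)\<close> is at least \<open>|Q(R - s)| / |Q(R)|\<^sup>2 \<cdot> \<integral>\<^bsub>Q(s)\<^esub> G\<close>, while
  \<open>\<integral> \<rho>\<^sup>2 = 1 / |Q(R)|\<close>. Hence \<open>2 |Q(R)| E[\<rho>] \<le> \<epsilon> - (1 - s/R)\<^sup>d \<integral>\<^bsub>Q(s)\<^esub> G\<close>. Since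
  \<open>\<integral> G = 1 > \<epsilon>\<close>, choosing first \<open>s\<close> and then \<open>R\<close> large makes this negative.\<close>

lemma lborel_distr_reflect:
  fixes x :: "'a::euclidean_space"
  shows "distr lborel borel (\<lambda>y. x - y) = lborel"
proof -
  have "lborel = density (distr lborel borel (\<lambda>y. x + (-1::real) *\<^sub>R y)) (\<lambda>_. \<bar>-1::real\<bar> ^ DIM('a))"
    by (rule lborel_affine) simp
  then show ?thesis by (simp add: density_1)
qed

lemma
  fixes h :: "'a::euclidean_space \<Rightarrow> real"
  assumes h: "integrable lborel h"
  shows integrable_reflect: "integrable lborel (\<lambda>y. h (x - y))"
    and integral_reflect: "(LINT y|lborel. h (x - y)) = (LINT y|lborel. h y)"
proof -
  have m: "h \<in> borel_measurable borel" using borel_measurable_integrable[OF h] by simp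
  have mm: "(\<lambda>y. x - y) \<in> measurable lborel borel" by simp
  show "integrable lborel (\<lambda>y. h (x - y))"
    using integrable_distr_eq[OF mm m] h lborel_distr_reflect[of x] by simp
  show "(LINT y|lborel. h (x - y)) = (LINT y|lborel. h y)"
    using integral_distr[OF mm m] lborel_distr_reflect[of x] by simp
qed

definition cube :: "real \<Rightarrow> 'a::euclidean_space set" where
  "cube r = cbox (- r *\<^sub>R One) (r *\<^sub>R One)"

lemma mem_cube: "z \<in> cube r \<longleftrightarrow> (\<forall>b\<in>Basis. \<bar>z \<bullet> b\<bar> \<le> r)"
  by (auto simp: cube_def mem_box abs_le_iff inner_simps)

lemma sets_cube [measurable]: "cube r \<in> sets lborel"
  by (simp add: cube_def)

lemma integrable_indicator_cube: "integrable lborel (indicator (cube r) :: 'a::euclidean_space \<Rightarrow> real)"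
proof -
  have "emeasure lborel (cube r :: 'a set) < \<infinity>"
    unfolding cube_def by (rule emeasure_lborel_cbox_finite)
  then show ?thesis using integrable_indicator[OF sets_cube, of r "1::real"] by simp
qed

lemma integral_indicator_cube:
  "0 \<le> r \<Longrightarrow> (LINT x|lborel. indicator (cube r) (x :: 'a::euclidean_space) :: real) = (2 * r) ^ DIM('a)"
  by (simp add: cube_def inner_simps)

lemma integrable_indicator_cube_mult:
  fixes f :: "'a::euclidean_space \<Rightarrow> real"
  shows "integrable lborel f \<Longrightarrow> integrable lborel (\<lambda>y. indicator (cube r) y * f y)"
  using integrable_real_mult_indicator[OF sets_cube] by (simp add: mult.commute)

lemma norm_le_imp_mem_cube: "norm z \<le> r \<Longrightarrow> z \<in> cube r"
  unfolding mem_cube using Basis_le_norm order_trans by blast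

lemma diff_mem_cube_imp_mem_cube:
  assumes "x \<in> cube (R - s)" and "x - y \<in> cube s"
  shows "y \<in> cube R"
  unfolding mem_cube
proof
  fix b :: 'a assume b: "b \<in> Basis"
  have "\<bar>x \<bullet> b\<bar> \<le> R - s" and "\<bar>(x - y) \<bullet> b\<bar> \<le> s"
    using assms b by (auto simp: mem_cube)
  then show "\<bar>y \<bullet> b\<bar> \<le> R" by (simp add: inner_diff_left)
qed

lemma cube_mono: "r \<le> r' \<Longrightarrow> cube r \<subseteq> cube r'"
  by (force simp: mem_cube)

lemma tendsto_integral_cube:
  fixes f :: "'a::euclidean_space \<Rightarrow> real"
  assumes f: "integrable lborel f"
  shows "(\<lambda>k::nat. LINT z|lborel. indicator (cube (real k)) z * f z) \<longlonglongrightarrow> (LINT z|lborel. f z)"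
proof (rule integral_dominated_convergence[where w="\<lambda>z. norm (f z)"])
  have [measurable]: "f \<in> borel_measurable borel" using borel_measurable_integrable[OF f] by simp
  show "f \<in> borel_measurable lborel"
    and "(\<lambda>z. indicator (cube (real k)) z * f z) \<in> borel_measurable lborel" for k
    by simp_all
  show "integrable lborel (\<lambda>z. norm (f z))" using f by simp
  show "AE z in lborel. norm (indicator (cube (real k)) z * f z) \<le> norm (f z)" for k
    by (auto simp: indicator_def)
  show "AE z in lborel. (\<lambda>k. indicator (cube (real k)) z * f z) \<longlonglongrightarrow> f z"
  proof (rule AE_I2, rule tendsto_eventually)
    fix z :: 'a
    obtain N :: nat where "norm z \<le> real N" using real_arch_simple by blast
    then have "z \<in> cube (real k)" if "N \<le> k" for k
      using that by (intro norm_le_imp_mem_cube) linarith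
    then show "\<forall>\<^sub>F k in sequentially. indicator (cube (real k)) z * f z = f z"
      by (auto intro: eventually_sequentiallyI[of N])
  qed
qed

definition uniform_cube_density :: "real \<Rightarrow> 'a::euclidean_space \<Rightarrow> real" where
  "uniform_cube_density R x = indicator (cube R) x / (2 * R) ^ DIM('a)"

lemma square_uniform_cube_density:
  "(uniform_cube_density R (x :: 'a::euclidean_space))\<^sup>2 = indicator (cube R) x / ((2 * R) ^ DIM('a))\<^sup>2"
  by (simp add: uniform_cube_density_def indicator_def power_divide)

lemma integral_square_uniform_cube_density:
  assumes "0 < R"
  shows "(LINT x|lborel. (uniform_cube_density R (x :: 'a::euclidean_space))\<^sup>2) = 1 / (2 * R) ^ DIM('a)"
  unfolding square_uniform_cube_density
  using assms integral_indicator_cube[of R, where 'a='a] by (simp add: power2_eq_square)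

lemma adm_density_uniform_cube_density:
  assumes R: "0 < R"
  shows "adm_density (uniform_cube_density R :: 'a::euclidean_space \<Rightarrow> real)"
  unfolding adm_density_def
proof (intro conjI allI)
  show "uniform_cube_density R \<in> borel_measurable lborel"
    unfolding uniform_cube_density_def[abs_def] by measurable
  show "0 \<le> uniform_cube_density R x" for x
    using R by (simp add: uniform_cube_density_def)
  show "integrable lborel (uniform_cube_density R :: 'a \<Rightarrow> real)"
    using integrable_indicator_cube[of R, where 'a='a] by (simp add: uniform_cube_density_def[abs_def])
  show "(LINT x|lborel. uniform_cube_density R (x :: 'a)) = 1"
    using R integral_indicator_cube[of R, where 'a='a] by (simp add: uniform_cube_density_def)
  show "integrable lborel (\<lambda>x. (uniform_cube_density R (x :: 'a))\<^sup>2)"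
    unfolding square_uniform_cube_density using integrable_indicator_cube[of R, where 'a='a] by simp
qed

lemma integral_cube_le_convolution_cube:
  fixes G :: "'a::euclidean_space \<Rightarrow> real"
  assumes G_nonneg: "\<And>x. 0 \<le> G x" and G_L1: "integrable lborel G"
    and x: "x \<in> cube (R - s)"
  shows "(LINT z|lborel. indicator (cube s) z * G z) \<le> (LINT y|lborel. indicator (cube R) y * G (x - y))"
proof -
  have int_Qs: "integrable lborel (\<lambda>z. indicator (cube s) z * G z)"
    using integrable_indicator_cube_mult[OF G_L1] .
  have "(LINT z|lborel. indicator (cube s) z * G z) = (LINT y|lborel. indicator (cube s) (x - y) * G (x - y))"
    using integral_reflect[OF int_Qs] by simp
  also have "\<dots> \<le> (LINT y|lborel. indicator (cube R) y * G (x - y))"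
  proof (rule integral_mono)
    show "integrable lborel (\<lambda>y. indicator (cube s) (x - y) * G (x - y))"
      using integrable_reflect[OF int_Qs] by simp
    show "integrable lborel (\<lambda>y. indicator (cube R) y * G (x - y))"
      using integrable_indicator_cube_mult[OF integrable_reflect[OF G_L1]] .
    show "indicator (cube s) (x - y) * G (x - y) \<le> indicator (cube R) y * G (x - y)" for y
      using G_nonneg[of "x - y"] diff_mem_cube_imp_mem_cube[OF x, of y]
      by (auto simp: indicator_def)
  qed
  finally show ?thesis .
qed

lemma interaction_uniform_cube_density_ge:
  fixes G :: "'a::euclidean_space \<Rightarrow> real"
  assumes G_nonneg: "\<And>x. 0 \<le> G x" and G_L1: "integrable lborel G"
    and s: "0 \<le> s" "s \<le> R" and R: "0 < R"
  defines "\<rho> \<equiv> uniform_cube_density R" and "V \<equiv> (2 * R) ^ DIM('a)"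
  shows "(2 * (R - s)) ^ DIM('a) / V\<^sup>2 * (LINT z|lborel. indicator (cube s) z * G z)
      \<le> (LINT x|lborel. (LINT y|lborel. G (x - y) * \<rho> x * \<rho> y))"
proof -
  have V: "0 < V" using R by (simp add: V_def)
  define J where "J x = (LINT y|lborel. indicator (cube R) y * G (x - y))" for x
  define F where "F x = (LINT y|lborel. G (x - y) * \<rho> x * \<rho> y)" for x
  define Is where "Is = (LINT z|lborel. indicator (cube s) z * G z)"
  have F_eq: "F x = indicator (cube R) x / V\<^sup>2 * J x" for x
    unfolding F_def J_def \<rho>_def uniform_cube_density_def V_def
    by (simp add: indicator_def power2_eq_square mult_ac)
  have J_nonneg: "0 \<le> J x" for x
    unfolding J_def using G_nonneg by (intro Bochner_Integration.integral_nonneg) auto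
  have J_le: "J x \<le> LINT z|lborel. G z" for x
  proof -
    have "J x \<le> (LINT y|lborel. G (x - y))" unfolding J_def
      using G_nonneg
      by (intro integral_mono integrable_reflect[OF G_L1]
          integrable_indicator_cube_mult[OF integrable_reflect[OF G_L1]])
        (auto simp: indicator_def)
    then show ?thesis using integral_reflect[OF G_L1] by simp
  qed
  have F_ge: "indicator (cube (R - s)) x * (Is / V\<^sup>2) \<le> F x" for x
  proof (cases "x \<in> cube (R - s)")
    case True
    then have "x \<in> cube R" using cube_mono[of "R - s" R] s by auto
    then show ?thesis
      using True integral_cube_le_convolution_cube[OF G_nonneg G_L1 True] V
      by (simp add: F_eq J_def Is_def divide_right_mono)
  qed (use J_nonneg in \<open>simp add: F_eq\<close>)
  have F_integrable: "integrable lborel F"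
  proof (rule Bochner_Integration.integrable_bound)
    show "integrable lborel (\<lambda>x. indicator (cube R) x / V\<^sup>2 * (LINT z|lborel. G z) :: real)"
      by (intro integrable_divide integrable_mult_left integrable_indicator_cube)
    show "F \<in> borel_measurable lborel" unfolding F_def \<rho>_def uniform_cube_density_def
      using borel_measurable_integrable[OF G_L1] by measurable
    show "AE x in lborel. norm (F x) \<le> norm (indicator (cube R) x / V\<^sup>2 * (LINT z|lborel. G z))"
      using J_nonneg J_le V
      by (intro AE_I2) (auto simp: F_eq indicator_def intro!: divide_right_mono order_trans[OF _ abs_ge_self])
  qed
  have "(LINT x|lborel. indicator (cube (R - s)) (x :: 'a) * (Is / V\<^sup>2)) \<le> (LINT x|lborel. F x)"
    by (intro integral_mono F_integrable F_ge integrable_mult_left integrable_indicator_cube)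
  then show ?thesis
    using integral_indicator_cube[of "R - s", where 'a='a] s
    by (simp add: F_def Is_def)
qed

lemma energy_uniform_cube_density_le:
  fixes G :: "'a::euclidean_space \<Rightarrow> real"
  assumes G_nonneg: "\<And>x. 0 \<le> G x" and G_L1: "integrable lborel G"
    and s: "0 \<le> s" "s \<le> R" and R: "0 < R"
  shows "energy \<epsilon> G (uniform_cube_density R)
      \<le> (\<epsilon> - (1 - s / R) ^ DIM('a) * (LINT z|lborel. indicator (cube s) z * G z)) / (2 * (2 * R) ^ DIM('a))"
proof -
  define V where "V = (2 * R) ^ DIM('a)"
  define Is where "Is = (LINT z|lborel. indicator (cube s) z * G z)"
  define q where "q = (1 - s / R) ^ DIM('a)"
  have V: "0 < V" using R by (simp add: V_def)
  have "2 * (R - s) = (1 - s / R) * (2 * R)"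
    using R by (simp add: field_simps)
  then have "(2 * (R - s)) ^ DIM('a) / V\<^sup>2 * Is = q * Is / V"
    using V by (simp add: q_def V_def power_mult_distrib power2_eq_square)
  then have "q * Is / V
      \<le> (LINT x|lborel. (LINT y|lborel. G (x - y) * uniform_cube_density R x * uniform_cube_density R y))"
    using interaction_uniform_cube_density_ge[OF G_nonneg G_L1 s R] by (simp add: V_def Is_def)
  then have "energy \<epsilon> G (uniform_cube_density R) \<le> \<epsilon> / 2 * (1 / V) - 1 / 2 * (q * Is / V)"
    unfolding energy_def integral_square_uniform_cube_density[OF R] V_def by simp
  also have "\<dots> = (\<epsilon> - q * Is) / (2 * V)"
    by (simp add: diff_divide_distrib)
  finally show ?thesis by (simp add: V_def Is_def q_def)
qed

theorem lemma3p7: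
  fixes G :: "'a::euclidean_space \<Rightarrow> real"
    and G' :: "'a \<Rightarrow> 'a"
    and G'' :: "'a \<Rightarrow> 'a \<Rightarrow>\<^sub>L 'a"
    and g g' :: "real \<Rightarrow> real"
    and g''0 :: real
    and \<epsilon> :: real
  assumes G_nonneg: "\<forall>x. 0 \<le> G x"
    and G_supp: "closure {x. G x \<noteq> 0} = UNIV"
    and G_deriv: "\<forall>x. (G has_derivative (\<lambda>h. G' x \<bullet> h)) (at x)"
    and G'_deriv: "\<forall>x. (G' has_derivative blinfun_apply (G'' x)) (at x)"
    and G''_cont: "continuous_on UNIV G''"
    and G_L1: "integrable lborel G"
    and G'_L1: "integrable lborel G'"
    and G_Linf: "bounded (range G)"
    and G_radial: "\<forall>x. G x = g (norm x)"
    and g_deriv: "\<forall>r\<ge>0. (g has_real_derivative g' r) (at r within {0..})"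
    and g'_neg: "\<forall>r>0. g' r < 0"
    and g''_0: "(g' has_real_derivative g''0) (at 0 within {0..})"
    and g''0_neg: "g''0 < 0"
    and g_lim: "(g \<longlongrightarrow> 0) at_top"
    and G_int: "(LINT x|lborel. G x) = 1"
    and eps: "0 < \<epsilon>" "\<epsilon> < 1"
  shows "\<exists>\<rho>. adm_density \<rho> \<and> energy \<epsilon> G \<rho> < 0"
proof -
  define I where "I k = (LINT z|lborel. indicator (cube (real k)) z * G z)" for k :: nat
  have "I \<longlonglongrightarrow> 1"
    using tendsto_integral_cube[OF G_L1] G_int by (simp add: I_def[abs_def])
  from order_tendstoD(1)[OF this eps(2)] obtain k where k: "\<epsilon> < I k"
    by (auto simp: eventually_sequentially)
  have "((\<lambda>R. (1 - real k / R) ^ DIM('a) * I k) \<longlongrightarrow> (1 - 0) ^ DIM('a) * I k) at_top"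
    by (intro tendsto_intros tendsto_divide_0[OF tendsto_const]
        filterlim_at_top_imp_at_infinity filterlim_ident)
  then have "\<forall>\<^sub>F R in at_top. \<epsilon> < (1 - real k / R) ^ DIM('a) * I k \<and> real k < R"
    using k by (intro eventually_conj order_tendstoD(1) eventually_gt_at_top) auto
  then obtain R where R: "\<epsilon> < (1 - real k / R) ^ DIM('a) * I k" "real k < R"
    by (auto simp: eventually_at_top_linorder)
  have "energy \<epsilon> G (uniform_cube_density R)
      \<le> (\<epsilon> - (1 - real k / R) ^ DIM('a) * I k) / (2 * (2 * R) ^ DIM('a))"
    using energy_uniform_cube_density_le[of G "real k" R] G_nonneg G_L1 R(2) by (simp add: I_def)
  also have "\<dots> < 0"
    using R by (intro divide_neg_pos) auto
  finally have "energy \<epsilon> G (uniform_cube_density R) < 0" .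
  moreover have "adm_density (uniform_cube_density R :: 'a \<Rightarrow> real)"
    using R(2) by (intro adm_density_uniform_cube_density) linarith
  ultimately show ?thesis by blast
qed

end
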